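(* Let $B$ be a Borel ideal of $S=k[x_1,\dots,x_n]$ and suppose $(x_1,\dots,x_p)$ is an associated prime of $S/B$. Then there exists $m\in\mathrm{Bgens}(B)$ such that $x_p$ divides $m$ and $\operatorname{Ann}_{S/B}\!\left(\frac{m}{x_p}\right)=(x_1,\dots,x_p)$.
   Context: A Borel ideal is a monomial ideal closed under Borel moves $m\mapsto m\frac{x_{i_1}}{x_{j_1}}\cdots\frac{x_{i_s}}{x_{j_s}}$ ($i_t<j_t$, all $x_{j_t}\mid m$). For a set $T$ of monomials, $\mathrm{Borel}(T)$ is the smallest Borel ideal containing $T$; $\mathrm{Bgens}(B)$ is the unique minimal set $T$ of monomials with $\mathrm{Borel}(T)=B$. For a monomial $\mu$, $\operatorname{Ann}_{S/B}(\mu)=(B:\mu)=\{f\in S: f\mu\in B\}$. *)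

theory Defs
  imports "HOL-Library.Poly_Mapping"
begin

(* Polynomials over a field 'k in variables x_1..x_n:
   exponent vectors are finitely supported maps nat =>0 nat (variable index -> exponent),
   polynomials are finitely supported maps from exponent vectors to coefficients,
   with convolution product (library instance). *)
type_synonym 'k mpoly = "(nat \<Rightarrow>\<^sub>0 nat) \<Rightarrow>\<^sub>0 'k"

definition monoms :: "nat \<Rightarrow> (nat \<Rightarrow>\<^sub>0 nat) set" where
  "monoms n = {m. Poly_Mapping.keys m \<subseteq> {1..n}}"

definition polyS :: "nat \<Rightarrow> ('k::field) mpoly set" where
  "polyS n = {f. Poly_Mapping.keys f \<subseteq> monoms n}"

definition mono_poly :: "(nat \<Rightarrow>\<^sub>0 nat) \<Rightarrow> ('k::field) mpoly" where
  "mono_poly m = Poly_Mapping.single m 1"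

definition var :: "nat \<Rightarrow> ('k::field) mpoly" where
  "var i = mono_poly (Poly_Mapping.single i 1)"

definition is_ideal :: "nat \<Rightarrow> ('k::field) mpoly set \<Rightarrow> bool" where
  "is_ideal n I \<longleftrightarrow> I \<subseteq> polyS n \<and> 0 \<in> I \<and>
     (\<forall>f\<in>I. \<forall>g\<in>I. f + g \<in> I) \<and> (\<forall>f\<in>I. \<forall>g\<in>polyS n. g * f \<in> I)"

definition ideal_gen :: "nat \<Rightarrow> ('k::field) mpoly set \<Rightarrow> 'k mpoly set" where
  "ideal_gen n G = \<Inter>{I. is_ideal n I \<and> G \<subseteq> I}"

definition prime_ideal :: "nat \<Rightarrow> ('k::field) mpoly set \<Rightarrow> bool" where
  "prime_ideal n P \<longleftrightarrow> is_ideal n P \<and> P \<noteq> polyS n \<and>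
     (\<forall>a\<in>polyS n. \<forall>b\<in>polyS n. a * b \<in> P \<longrightarrow> a \<in> P \<or> b \<in> P)"

(* colon ideal (B : f) = Ann_{S/B}(f) *)
definition colon :: "nat \<Rightarrow> ('k::field) mpoly set \<Rightarrow> 'k mpoly \<Rightarrow> 'k mpoly set" where
  "colon n B f = {g \<in> polyS n. g * f \<in> B}"

definition ass_prime :: "nat \<Rightarrow> ('k::field) mpoly set \<Rightarrow> 'k mpoly set \<Rightarrow> bool" where
  "ass_prime n B P \<longleftrightarrow> prime_ideal n P \<and> (\<exists>f\<in>polyS n. colon n B f = P)"

definition monomial_ideal :: "nat \<Rightarrow> ('k::field) mpoly set \<Rightarrow> bool" where
  "monomial_ideal n B \<longleftrightarrow> is_ideal n B \<and>
     (\<exists>M \<subseteq> monoms n. B = ideal_gen n (mono_poly ` M))"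

(* a Borel move given by a list of pairs (i_t, j_t):
   m |-> m * x_{i_1}...x_{i_s} / (x_{j_1}...x_{j_s}) *)
definition move_num :: "(nat \<times> nat) list \<Rightarrow> (nat \<Rightarrow>\<^sub>0 nat)" where
  "move_num ps = (\<Sum>(i,j)\<leftarrow>ps. Poly_Mapping.single i 1)"

definition move_den :: "(nat \<times> nat) list \<Rightarrow> (nat \<Rightarrow>\<^sub>0 nat)" where
  "move_den ps = (\<Sum>(i,j)\<leftarrow>ps. Poly_Mapping.single j 1)"

definition borel_move_ok :: "nat \<Rightarrow> (nat \<times> nat) list \<Rightarrow> (nat \<Rightarrow>\<^sub>0 nat) \<Rightarrow> bool" where
  "borel_move_ok n ps m \<longleftrightarrow> (\<forall>(i,j)\<in>set ps. 1 \<le> i \<and> i < j \<and> j \<le> n) \<and>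
     (\<forall>k. Poly_Mapping.lookup (move_den ps) k \<le> Poly_Mapping.lookup m k)"

definition borel_ideal :: "nat \<Rightarrow> ('k::field) mpoly set \<Rightarrow> bool" where
  "borel_ideal n B \<longleftrightarrow> monomial_ideal n B \<and>
     (\<forall>m\<in>monoms n. \<forall>ps. mono_poly m \<in> B \<and> borel_move_ok n ps m \<longrightarrow>
        mono_poly (m - move_den ps + move_num ps) \<in> B)"

definition borel_of :: "nat \<Rightarrow> (nat \<Rightarrow>\<^sub>0 nat) set \<Rightarrow> ('k::field) mpoly set" where
  "borel_of n T = \<Inter>{B. borel_ideal n B \<and> mono_poly ` T \<subseteq> B}"

definition bgens :: "nat \<Rightarrow> ('k::field) mpoly set \<Rightarrow> (nat \<Rightarrow>\<^sub>0 nat) set" where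
  "bgens n B = (THE T. T \<subseteq> monoms n \<and> (borel_of n T :: 'k mpoly set) = B \<and>
      (\<forall>T'. T' \<subset> T \<longrightarrow> (borel_of n T' :: 'k mpoly set) \<noteq> B))"

end

theory Submission
  imports Defs
begin

(* A monomial ideal B of S is determined by the set U of exponent vectors of the monomials
   it contains: U is closed under multiplication by variables and B consists of exactly the
   polynomials of S all of whose terms lie in U ("supp_ideal n U").  For such B, the colon
   ideal (B : x^mu) is again of this form, with exponent set {k. k + mu \<in> U}, and the prime
   P = (x_1,...,x_p) corresponds to the vectors involving some x_i with i \<le> p.

   Borel(T) is the support ideal of the Borel closure of T (closure under multiplication by
   variables and elementary moves x_j \<mapsto> x_i, i < j), so Bgens(B) is the set of elements
   of U that do not arise from another element of U by one such step ("borel_minimal").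

   If (B : f) = P, a product argument over the terms of f yields a monomial x^mu with
   (B : x^mu) = P (an "annihilator witness").  Choosing a witness of minimal weight
   sum_i mu_i (n + 1 - i), the monomial x_p x^mu is Borel-minimal: any step producing it
   would yield a witness of smaller weight.  Hence m = x_p x^mu is the required generator. *)

abbreviation E :: "nat \<Rightarrow> (nat \<Rightarrow>\<^sub>0 nat)" where
  "E i \<equiv> Poly_Mapping.single i 1"

lemma E_plus_minus: "0 < Poly_Mapping.lookup u i \<Longrightarrow> u - E i + E i = u"
  by (rule poly_mapping_eqI) (auto simp: lookup_add lookup_minus lookup_single when_def)

lemma monoms_iff: "m \<in> monoms n \<longleftrightarrow> (\<forall>k. Poly_Mapping.lookup m k \<noteq> 0 \<longrightarrow> 1 \<le> k \<and> k \<le> n)"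
  by (auto simp: monoms_def in_keys_iff subset_iff)

lemma monoms_zero: "0 \<in> monoms n"
  by (simp add: monoms_def)

lemma monoms_add: "a \<in> monoms n \<Longrightarrow> b \<in> monoms n \<Longrightarrow> a + b \<in> monoms n"
  by (auto simp: monoms_iff lookup_add)

lemma monoms_sum: "finite A \<Longrightarrow> (\<forall>a\<in>A. h a \<in> monoms n) \<Longrightarrow> sum h A \<in> monoms n"
  by (induction A rule: finite_induct) (auto simp: monoms_zero monoms_add)

lemma monoms_minus: "a \<in> monoms n \<Longrightarrow> a - b \<in> monoms n"
  by (auto simp: monoms_iff lookup_minus)

lemma monoms_E: "1 \<le> k \<Longrightarrow> k \<le> n \<Longrightarrow> E k \<in> monoms n"
  by (simp add: monoms_def)

lemma monoms_move: "m \<in> monoms n \<Longrightarrow> 1 \<le> i \<Longrightarrow> i \<le> n \<Longrightarrow> m - E j + E i \<in> monoms n"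
  by (auto simp: monoms_iff lookup_add lookup_minus lookup_single when_def)

text \<open>A weight on exponent vectors that strictly increases under multiplication by a
  variable and under elementary Borel moves (x_j replaced by x_i, i < j); it makes both
  descent arguments below well-founded.\<close>

definition weight :: "nat \<Rightarrow> (nat \<Rightarrow>\<^sub>0 nat) \<Rightarrow> nat" where
  "weight n u = (\<Sum>i\<in>{1..n}. Poly_Mapping.lookup u i * (n + 1 - i))"

lemma weight_add_E:
  assumes "1 \<le> k" "k \<le> n"
  shows "weight n (u + E k) = weight n u + (n + 1 - k)"
proof -
  have "weight n (E k) = (\<Sum>i\<in>{1..n}. if k = i then n + 1 - i else 0)"
    unfolding weight_def by (rule sum.cong) (auto simp: lookup_single when_def)
  also have "\<dots> = n + 1 - k" using assms by simp
  finally show ?thesis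
    by (simp add: weight_def lookup_add sum.distrib distrib_right)
qed

lemma poly_monomial_expansion:
  "g = (\<Sum>q\<in>Poly_Mapping.keys g. Poly_Mapping.single q (Poly_Mapping.lookup g q))"
proof (rule poly_mapping_eqI)
  fix k
  have "Poly_Mapping.lookup (\<Sum>q\<in>Poly_Mapping.keys g. Poly_Mapping.single q (Poly_Mapping.lookup g q)) k
      = (\<Sum>q\<in>Poly_Mapping.keys g. if k = q then Poly_Mapping.lookup g q else 0)"
    by (simp add: lookup_sum lookup_single when_def eq_commute)
  also have "\<dots> = Poly_Mapping.lookup g k"
    by (simp add: in_keys_iff)
  finally show "Poly_Mapping.lookup g k = Poly_Mapping.lookup
      (\<Sum>q\<in>Poly_Mapping.keys g. Poly_Mapping.single q (Poly_Mapping.lookup g q)) k"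
    by simp
qed

lemma lookup_single_mult:
  fixes g :: "('k::field) mpoly"
  shows "Poly_Mapping.lookup (Poly_Mapping.single a c * g) k =
     (if \<exists>q. k = a + q then c * Poly_Mapping.lookup g (k - a) else 0)"
proof -
  have "Poly_Mapping.single a c * g
      = (\<Sum>q\<in>Poly_Mapping.keys g. Poly_Mapping.single (a + q) (c * Poly_Mapping.lookup g q))"
    by (subst poly_monomial_expansion[of g]) (simp add: sum_distrib_left mult_single)
  then have "Poly_Mapping.lookup (Poly_Mapping.single a c * g) k =
        (\<Sum>q\<in>Poly_Mapping.keys g. if k = a + q then c * Poly_Mapping.lookup g q else 0)"
    by (simp add: lookup_sum lookup_single when_def eq_commute)
  also have "\<dots> = (if \<exists>q. k = a + q then c * Poly_Mapping.lookup g (k - a) else 0)"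
  proof (cases "\<exists>q. k = a + q")
    case True
    then obtain q where q: "k = a + q" by blast
    have "(\<Sum>q'\<in>Poly_Mapping.keys g. if k = a + q' then c * Poly_Mapping.lookup g q' else 0)
        = (\<Sum>q'\<in>Poly_Mapping.keys g. if q' = q then c * Poly_Mapping.lookup g q' else 0)"
      by (rule sum.cong) (auto simp: q)
    also have "\<dots> = c * Poly_Mapping.lookup g q" by (simp add: in_keys_iff)
    finally show ?thesis using q by simp
  qed (auto intro!: sum.neutral)
  finally show ?thesis .
qed

lemma keys_monomial_mult:
  fixes g :: "('k::field) mpoly"
  shows "Poly_Mapping.keys (mono_poly a * g) = (\<lambda>q. a + q) ` Poly_Mapping.keys g"
proof (rule set_eqI)
  fix x
  have "x \<in> Poly_Mapping.keys (mono_poly a * g) \<longleftrightarrow> (\<exists>q. x = a + q \<and> q \<in> Poly_Mapping.keys g)"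
    by (auto simp: mono_poly_def in_keys_iff lookup_single_mult)
  then show "x \<in> Poly_Mapping.keys (mono_poly a * g) \<longleftrightarrow> x \<in> (\<lambda>q. a + q) ` Poly_Mapping.keys g"
    by blast
qed

lemma mono_mult: "(mono_poly a :: ('k::field) mpoly) * mono_poly b = mono_poly (a + b)"
  by (simp add: mono_poly_def mult_single)

lemma mono_polyS: "(mono_poly a :: ('k::field) mpoly) \<in> polyS n \<longleftrightarrow> a \<in> monoms n"
  by (simp add: polyS_def mono_poly_def)

lemma polyS_add: "f \<in> polyS n \<Longrightarrow> g \<in> polyS n \<Longrightarrow> f + g \<in> polyS n"
  using keys_add[of f g] by (auto simp: polyS_def)

lemma polyS_mult: "(f::('k::field) mpoly) \<in> polyS n \<Longrightarrow> g \<in> polyS n \<Longrightarrow> f * g \<in> polyS n"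
  using keys_mult[of f g] by (fastforce simp: polyS_def intro: monoms_add)

lemma ideal_mono_mult:
  "is_ideal n I \<Longrightarrow> (mono_poly u :: ('k::field) mpoly) \<in> I \<Longrightarrow> c \<in> monoms n
    \<Longrightarrow> mono_poly (u + c) \<in> I"
  by (metis is_ideal_def mono_mult mono_polyS add.commute)

lemma ideal_sum:
  assumes "is_ideal n I"
  shows "finite A \<Longrightarrow> (\<forall>a\<in>A. h a \<in> I) \<Longrightarrow> sum h A \<in> I"
  by (induction A rule: finite_induct) (use assms in \<open>auto simp: is_ideal_def\<close>)

lemma ideal_from_monomials:
  assumes I: "is_ideal n (I :: ('k::field) mpoly set)" and f: "f \<in> polyS n"
    and m: "\<forall>k\<in>Poly_Mapping.keys f. mono_poly k \<in> I"
  shows "f \<in> I"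
proof -
  have "Poly_Mapping.single q (Poly_Mapping.lookup f q) \<in> I" if q: "q \<in> Poly_Mapping.keys f" for q
  proof -
    have "Poly_Mapping.single q (Poly_Mapping.lookup f q)
        = Poly_Mapping.single 0 (Poly_Mapping.lookup f q) * mono_poly q"
      by (simp add: mono_poly_def mult_single)
    moreover have "Poly_Mapping.single 0 (Poly_Mapping.lookup f q) \<in> polyS n"
      by (auto simp: polyS_def monoms_zero)
    ultimately show ?thesis using I m q by (auto simp: is_ideal_def)
  qed
  then have "(\<Sum>q\<in>Poly_Mapping.keys f. Poly_Mapping.single q (Poly_Mapping.lookup f q)) \<in> I"
    by (intro ideal_sum[OF I]) auto
  then show ?thesis by (subst poly_monomial_expansion)
qed

lemma ideal_gen_least: "is_ideal n I \<Longrightarrow> G \<subseteq> I \<Longrightarrow> ideal_gen n G \<subseteq> I"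
  by (auto simp: ideal_gen_def)

lemma ideal_gen_sup: "G \<subseteq> ideal_gen n G"
  by (auto simp: ideal_gen_def)

subsection \<open>Ideals spanned by sets of exponent vectors\<close>

definition supp_ideal :: "nat \<Rightarrow> (nat \<Rightarrow>\<^sub>0 nat) set \<Rightarrow> ('k::field) mpoly set" where
  "supp_ideal n U = {f \<in> polyS n. Poly_Mapping.keys f \<subseteq> U}"

definition up_closed :: "nat \<Rightarrow> (nat \<Rightarrow>\<^sub>0 nat) set \<Rightarrow> bool" where
  "up_closed n U \<longleftrightarrow> U \<subseteq> monoms n \<and> (\<forall>u\<in>U. \<forall>c\<in>monoms n. u + c \<in> U)"

lemma supp_ideal_is_ideal:
  assumes "up_closed n U"
  shows "is_ideal n (supp_ideal n U :: ('k::field) mpoly set)"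
  unfolding is_ideal_def
proof (intro conjI ballI)
  show "supp_ideal n U \<subseteq> polyS n" by (auto simp: supp_ideal_def)
  show "0 \<in> (supp_ideal n U :: 'k mpoly set)" by (simp add: supp_ideal_def polyS_def)
  fix f g :: "'k mpoly"
  assume f: "f \<in> supp_ideal n U"
  show "f + g \<in> supp_ideal n U" if "g \<in> supp_ideal n U"
    using f that keys_add[of f g] by (auto simp: supp_ideal_def polyS_add)
  show "g * f \<in> supp_ideal n U" if g: "g \<in> polyS n"
  proof -
    have "a + b \<in> U" if "a \<in> Poly_Mapping.keys g" "b \<in> Poly_Mapping.keys f" for a b
    proof -
      have "b + a \<in> U"
        using assms f g that unfolding up_closed_def supp_ideal_def polyS_def by blast
      then show ?thesis by (simp add: add.commute)
    qed
    then show ?thesis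
      using f g keys_mult[of g f] by (auto simp: supp_ideal_def polyS_mult)
  qed
qed

lemma mono_in_supp_ideal:
  "U \<subseteq> monoms n \<Longrightarrow> (mono_poly k :: ('k::field) mpoly) \<in> supp_ideal n U \<longleftrightarrow> k \<in> U"
  by (auto simp: supp_ideal_def polyS_def mono_poly_def)

lemma supp_ideal_inj:
  "U \<subseteq> monoms n \<Longrightarrow> V \<subseteq> monoms n \<Longrightarrow> (supp_ideal n U :: ('k::field) mpoly set) = supp_ideal n V
    \<Longrightarrow> U = V"
  by (metis mono_in_supp_ideal subsetI subset_antisym)

lemma supp_ideal_subset_gen:
  assumes "\<And>u I. u \<in> U \<Longrightarrow> is_ideal n I \<Longrightarrow> G \<subseteq> I \<Longrightarrow> (mono_poly u :: ('k::field) mpoly) \<in> I"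
  shows "(supp_ideal n U :: 'k mpoly set) \<subseteq> ideal_gen n G"
proof
  fix f :: "'k mpoly" assume f: "f \<in> supp_ideal n U"
  show "f \<in> ideal_gen n G"
    unfolding ideal_gen_def
  proof (rule InterI, clarify)
    fix I :: "'k mpoly set" assume I: "is_ideal n I" "G \<subseteq> I"
    have "\<forall>k\<in>Poly_Mapping.keys f. mono_poly k \<in> I"
      using f assms[OF _ I] by (auto simp: supp_ideal_def)
    then show "f \<in> I" using ideal_from_monomials[OF I(1)] f by (simp add: supp_ideal_def)
  qed
qed

lemma supp_ideal_eq_gen:
  assumes "up_closed n U"
  shows "(supp_ideal n U :: ('k::field) mpoly set) = ideal_gen n (mono_poly ` U)"
proof
  have U: "U \<subseteq> monoms n" using assms by (simp add: up_closed_def)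
  show "ideal_gen n (mono_poly ` U) \<subseteq> (supp_ideal n U :: 'k mpoly set)"
    using ideal_gen_least[OF supp_ideal_is_ideal[OF assms]] mono_in_supp_ideal[OF U] by blast
  show "(supp_ideal n U :: 'k mpoly set) \<subseteq> ideal_gen n (mono_poly ` U)"
    by (rule supp_ideal_subset_gen) blast
qed

definition mono_exps :: "nat \<Rightarrow> ('k::field) mpoly set \<Rightarrow> (nat \<Rightarrow>\<^sub>0 nat) set" where
  "mono_exps n B = {m \<in> monoms n. mono_poly m \<in> B}"

lemma monomial_ideal_supp:
  fixes B :: "('k::field) mpoly set"
  assumes "monomial_ideal n B"
  shows "B = supp_ideal n (mono_exps n B)" and "up_closed n (mono_exps n B)"
proof -
  have I: "is_ideal n B" using assms by (simp add: monomial_ideal_def)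
  show up: "up_closed n (mono_exps n B)"
    using ideal_mono_mult[OF I] by (auto simp: up_closed_def mono_exps_def monoms_add)
  obtain M where M: "M \<subseteq> monoms n" "B = ideal_gen n (mono_poly ` M)"
    using assms by (auto simp: monomial_ideal_def)
  have "M \<subseteq> mono_exps n B" using M ideal_gen_sup by (fastforce simp: mono_exps_def)
  then have "mono_poly ` M \<subseteq> (supp_ideal n (mono_exps n B) :: 'k mpoly set)"
    using mono_in_supp_ideal[of "mono_exps n B" n] by (auto simp: mono_exps_def)
  then have "B \<subseteq> supp_ideal n (mono_exps n B)"
    using M(2) ideal_gen_least[OF supp_ideal_is_ideal[OF up]] by simp
  moreover have "supp_ideal n (mono_exps n B) \<subseteq> B"
    using ideal_from_monomials[OF I] by (auto simp: supp_ideal_def mono_exps_def)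
  ultimately show "B = supp_ideal n (mono_exps n B)" by auto
qed

lemma mono_mult_in_supp_ideal:
  fixes g :: "('k::field) mpoly"
  assumes "U \<subseteq> monoms n" and "g \<in> polyS n"
  shows "mono_poly a * g \<in> supp_ideal n U \<longleftrightarrow> (\<forall>k\<in>Poly_Mapping.keys g. a + k \<in> U)"
  using assms by (auto simp: supp_ideal_def polyS_def keys_monomial_mult)

lemma colon_monomial:
  fixes B :: "('k::field) mpoly set"
  assumes B: "B = supp_ideal n U" and U: "U \<subseteq> monoms n"
  shows "colon n B (mono_poly \<mu>) = supp_ideal n {k \<in> monoms n. k + \<mu> \<in> U}"
proof -
  have "g \<in> colon n B (mono_poly \<mu>) \<longleftrightarrow> g \<in> polyS n \<and> mono_poly \<mu> * g \<in> supp_ideal n U" for g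
    by (simp add: colon_def B mult.commute)
  also have "\<dots> g \<longleftrightarrow> g \<in> polyS n \<and> (\<forall>k\<in>Poly_Mapping.keys g. \<mu> + k \<in> U)" for g
    using mono_mult_in_supp_ideal[OF U] by blast
  also have "\<dots> g \<longleftrightarrow> g \<in> supp_ideal n {k \<in> monoms n. k + \<mu> \<in> U}" for g
    by (auto simp: supp_ideal_def polyS_def add.commute)
  finally show ?thesis by blast
qed

definition prime_exps :: "nat \<Rightarrow> nat \<Rightarrow> (nat \<Rightarrow>\<^sub>0 nat) set" where
  "prime_exps n p = {k \<in> monoms n. \<exists>i. 1 \<le> i \<and> i \<le> p \<and> 0 < Poly_Mapping.lookup k i}"

lemma prime_exps_up_closed: "up_closed n (prime_exps n p)"
  by (auto simp: up_closed_def prime_exps_def monoms_add lookup_add)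

lemma prime_ideal_supp:
  assumes "p \<le> n"
  shows "(ideal_gen n {var i | i. 1 \<le> i \<and> i \<le> p} :: ('k::field) mpoly set)
       = supp_ideal n (prime_exps n p)"
proof
  have sub: "prime_exps n p \<subseteq> monoms n" by (auto simp: prime_exps_def)
  have "E i \<in> prime_exps n p" if "1 \<le> i" "i \<le> p" for i
    using that assms monoms_E[of i n] by (auto simp: prime_exps_def)
  then have "{var i | i. 1 \<le> i \<and> i \<le> p} \<subseteq> (supp_ideal n (prime_exps n p) :: 'k mpoly set)"
    by (auto simp: var_def mono_in_supp_ideal[OF sub])
  then show "ideal_gen n {var i | i. 1 \<le> i \<and> i \<le> p} \<subseteq> (supp_ideal n (prime_exps n p) :: 'k mpoly set)"
    by (rule ideal_gen_least[OF supp_ideal_is_ideal[OF prime_exps_up_closed]])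
next
  show "(supp_ideal n (prime_exps n p) :: 'k mpoly set) \<subseteq> ideal_gen n {var i | i. 1 \<le> i \<and> i \<le> p}"
  proof (rule supp_ideal_subset_gen)
    fix u and I :: "'k mpoly set"
    assume u: "u \<in> prime_exps n p" and I: "is_ideal n I" "{var i | i. 1 \<le> i \<and> i \<le> p} \<subseteq> I"
    obtain i where i: "1 \<le> i" "i \<le> p" "0 < Poly_Mapping.lookup u i" "u \<in> monoms n"
      using u by (auto simp: prime_exps_def)
    have "mono_poly (E i + (u - E i)) \<in> I"
      using ideal_mono_mult[OF I(1), of "E i" "u - E i"] I(2) i
      by (auto simp: var_def monoms_minus)
    then show "mono_poly u \<in> I" using E_plus_minus[OF i(3)] by (simp add: add.commute)
  qed
qed

subsection \<open>Borel closure and Borel generators\<close>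

lemma borel_elementary_move:
  fixes B :: "('k::field) mpoly set"
  assumes "borel_ideal n B" "m \<in> monoms n" "mono_poly m \<in> B"
    and "1 \<le> i" "i < j" "j \<le> n" "0 < Poly_Mapping.lookup m j"
  shows "mono_poly (m - E j + E i) \<in> B"
proof -
  have "borel_move_ok n [(i,j)] m"
    using assms by (auto simp: borel_move_ok_def move_den_def lookup_single when_def)
  then show ?thesis
    using assms(1-3) unfolding borel_ideal_def by (fastforce simp: move_den_def move_num_def)
qed

definition borel_closed :: "nat \<Rightarrow> (nat \<Rightarrow>\<^sub>0 nat) set \<Rightarrow> bool" where
  "borel_closed n U \<longleftrightarrow> (\<forall>m i j. m \<in> U \<longrightarrow> 1 \<le> i \<longrightarrow> i < j \<longrightarrow> j \<le> n
      \<longrightarrow> 0 < Poly_Mapping.lookup m j \<longrightarrow> m - E j + E i \<in> U)"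

lemma borel_ideal_exps:
  assumes "borel_ideal n (B :: ('k::field) mpoly set)"
  shows "borel_closed n (mono_exps n B)"
  unfolding borel_closed_def
proof (intro allI impI)
  fix m i j
  assume "m \<in> mono_exps n B" "1 \<le> i" "i < j" "j \<le> n" "0 < Poly_Mapping.lookup m j"
  then show "m - E j + E i \<in> mono_exps n B"
    using borel_elementary_move[OF assms] monoms_move[of m n i j] by (auto simp: mono_exps_def)
qed

inductive_set borel_closure :: "nat \<Rightarrow> (nat \<Rightarrow>\<^sub>0 nat) set \<Rightarrow> (nat \<Rightarrow>\<^sub>0 nat) set"
  for n T where
  gen: "t \<in> T \<Longrightarrow> t \<in> monoms n \<Longrightarrow> t \<in> borel_closure n T"
| mult: "m \<in> borel_closure n T \<Longrightarrow> c \<in> monoms n \<Longrightarrow> m + c \<in> borel_closure n T"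
| move: "m \<in> borel_closure n T \<Longrightarrow> 1 \<le> i \<Longrightarrow> i < j \<Longrightarrow> j \<le> n
      \<Longrightarrow> 0 < Poly_Mapping.lookup m j \<Longrightarrow> m - E j + E i \<in> borel_closure n T"

lemma borel_closure_monoms: "m \<in> borel_closure n T \<Longrightarrow> m \<in> monoms n"
proof (induction rule: borel_closure.induct)
  case (move m i j)
  then show ?case using monoms_move[of m n i j] by simp
qed (auto simp: monoms_add)

lemma borel_closure_up_closed: "up_closed n (borel_closure n T)"
  using borel_closure_monoms by (auto simp: up_closed_def intro: borel_closure.mult)

lemma move_cons:
  "move_den ((i,j) # ps) = E j + move_den ps" "move_num ((i,j) # ps) = E i + move_num ps"
  by (simp_all add: move_den_def move_num_def)

lemma borel_closure_moves:
  "borel_move_ok n ps m \<Longrightarrow> m \<in> borel_closure n T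
    \<Longrightarrow> m - move_den ps + move_num ps \<in> borel_closure n T"
proof (induction ps arbitrary: m)
  case Nil
  then show ?case by (simp add: move_den_def move_num_def)
next
  case (Cons a ps)
  obtain i j where a: "a = (i,j)" by (cases a)
  have ij: "1 \<le> i" "i < j" "j \<le> n" using Cons.prems a by (auto simp: borel_move_ok_def)
  have le: "Poly_Mapping.lookup (E j + move_den ps) k \<le> Poly_Mapping.lookup m k" for k
    using Cons.prems a by (auto simp: borel_move_ok_def move_cons)
  have pos: "0 < Poly_Mapping.lookup m j" using le[of j] by (simp add: lookup_add)
  define m' where "m' = m - E j + E i"
  have m': "m' \<in> borel_closure n T"
    unfolding m'_def using Cons.prems(2) ij pos by (rule borel_closure.move)
  have "Poly_Mapping.lookup (move_den ps) k \<le> Poly_Mapping.lookup m' k" for k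
    using le[of k] by (auto simp: m'_def lookup_add lookup_minus lookup_single when_def)
  then have "borel_move_ok n ps m'"
    using Cons.prems by (auto simp: borel_move_ok_def)
  then have "m' - move_den ps + move_num ps \<in> borel_closure n T" using Cons.IH m' by blast
  moreover have "m' - move_den ps + move_num ps = m - move_den (a # ps) + move_num (a # ps)"
  proof (rule poly_mapping_eqI)
    fix k
    show "Poly_Mapping.lookup (m' - move_den ps + move_num ps) k
        = Poly_Mapping.lookup (m - move_den (a # ps) + move_num (a # ps)) k"
      using le[of k] by (auto simp: a m'_def move_cons lookup_add lookup_minus lookup_single when_def)
  qed
  ultimately show ?case by simp
qed

lemma borel_closure_borel:
  "borel_ideal n (supp_ideal n (borel_closure n T) :: ('k::field) mpoly set)"
proof -
  have sub: "borel_closure n T \<subseteq> monoms n" using borel_closure_monoms by blast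
  have "monomial_ideal n (supp_ideal n (borel_closure n T) :: 'k mpoly set)"
    unfolding monomial_ideal_def
    using supp_ideal_is_ideal[OF borel_closure_up_closed]
      supp_ideal_eq_gen[OF borel_closure_up_closed] sub by blast
  then show ?thesis
    unfolding borel_ideal_def
    using borel_closure_moves by (auto simp: mono_in_supp_ideal[OF sub])
qed

lemma borel_closure_in_borel:
  fixes B :: "('k::field) mpoly set"
  assumes B: "borel_ideal n B" and T: "mono_poly ` T \<subseteq> B"
  shows "m \<in> borel_closure n T \<Longrightarrow> mono_poly m \<in> B"
proof (induction rule: borel_closure.induct)
  case (mult m c)
  then show ?case
    using B ideal_mono_mult by (auto simp: borel_ideal_def monomial_ideal_def)
next
  case (move m i j)
  then show ?case using borel_elementary_move[OF B] borel_closure_monoms by blast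
qed (use T in auto)

lemma borel_of_closure:
  assumes "T \<subseteq> monoms n"
  shows "(borel_of n T :: ('k::field) mpoly set) = supp_ideal n (borel_closure n T)"
proof
  have "mono_poly ` T \<subseteq> (supp_ideal n (borel_closure n T) :: 'k mpoly set)"
    using assms mono_in_supp_ideal[of "borel_closure n T" n] borel_closure_monoms
      borel_closure.gen by blast
  then show "(borel_of n T :: 'k mpoly set) \<subseteq> supp_ideal n (borel_closure n T)"
    using borel_closure_borel unfolding borel_of_def by blast
  show "(supp_ideal n (borel_closure n T) :: 'k mpoly set) \<subseteq> borel_of n T"
    unfolding borel_of_def
  proof (rule Inter_greatest, clarify)
    fix B' :: "'k mpoly set" and f :: "'k mpoly"
    assume B': "borel_ideal n B'" "mono_poly ` T \<subseteq> B'"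
      and f: "f \<in> supp_ideal n (borel_closure n T)"
    have "is_ideal n B'" using B' by (simp add: borel_ideal_def monomial_ideal_def)
    then show "f \<in> B'"
      by (rule ideal_from_monomials)
        (use f borel_closure_in_borel[OF B'] in \<open>auto simp: supp_ideal_def\<close>)
  qed
qed

definition borel_minimal :: "nat \<Rightarrow> (nat \<Rightarrow>\<^sub>0 nat) set \<Rightarrow> (nat \<Rightarrow>\<^sub>0 nat) \<Rightarrow> bool" where
  "borel_minimal n U m \<longleftrightarrow> m \<in> U
     \<and> \<not> (\<exists>w k. w \<in> U \<and> 1 \<le> k \<and> k \<le> n \<and> m = w + E k)
     \<and> \<not> (\<exists>w i j. w \<in> U \<and> 1 \<le> i \<and> i < j \<and> j \<le> n \<and> 0 < Poly_Mapping.lookup w j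
            \<and> m = w - E j + E i)"

lemma borel_closure_cases:
  "m \<in> borel_closure n T \<Longrightarrow> m \<in> T
    \<or> (\<exists>w k. w \<in> borel_closure n T \<and> 1 \<le> k \<and> k \<le> n \<and> m = w + E k)
    \<or> (\<exists>w i j. w \<in> borel_closure n T \<and> 1 \<le> i \<and> i < j \<and> j \<le> n
         \<and> 0 < Poly_Mapping.lookup w j \<and> m = w - E j + E i)"
proof (induction rule: borel_closure.induct)
  case (mult m c)
  show ?case
  proof (cases "c = 0")
    case False
    then obtain k where k: "Poly_Mapping.lookup c k \<noteq> 0"
      by (metis lookup_zero poly_mapping_eqI)
    have "1 \<le> k" "k \<le> n" using mult.hyps(2) k by (auto simp: monoms_iff)
    moreover have "m + (c - E k) \<in> borel_closure n T"
      using mult.hyps(1) monoms_minus[OF mult.hyps(2)] by (rule borel_closure.mult)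
    moreover have "m + c = (m + (c - E k)) + E k"
      using E_plus_minus[of c k] k by (simp add: add.assoc)
    ultimately show ?thesis by blast
  qed (use mult in simp)
qed blast+

lemma borel_minimal_in_gens:
  "borel_closure n T = U \<Longrightarrow> borel_minimal n U g \<Longrightarrow> g \<in> T"
  using borel_closure_cases[of g n T] unfolding borel_minimal_def by blast

lemma borel_closure_minimal:
  fixes B :: "('k::field) mpoly set"
  assumes B: "borel_ideal n B"
  shows "borel_closure n {m. borel_minimal n (mono_exps n B) m} = mono_exps n B"
proof
  let ?U = "mono_exps n B" and ?G = "{m. borel_minimal n (mono_exps n B) m}"
  have "mono_poly ` ?G \<subseteq> B" by (auto simp: borel_minimal_def mono_exps_def)
  then show "borel_closure n ?G \<subseteq> ?U"
    using borel_closure_in_borel[OF B] borel_closure_monoms by (auto simp: mono_exps_def)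
  show "?U \<subseteq> borel_closure n ?G"
  proof
    fix u assume "u \<in> ?U"
    then show "u \<in> borel_closure n ?G"
    proof (induction u rule: measure_induct_rule[of "weight n"])
      case (less u)
      show ?case
      proof (cases "borel_minimal n ?U u")
        case True
        then show ?thesis using less.prems by (auto simp: mono_exps_def intro: borel_closure.gen)
      next
        case False
        then consider (mult) w k where "w \<in> ?U" "1 \<le> k" "k \<le> n" "u = w + E k"
          | (move) w i j where "w \<in> ?U" "1 \<le> i" "i < j" "j \<le> n" "0 < Poly_Mapping.lookup w j"
              "u = w - E j + E i"
          using less.prems unfolding borel_minimal_def by blast
        then show ?thesis
        proof cases
          case mult
          then have "weight n w < weight n u" using weight_add_E[of k n w] by simp
          then show ?thesis
            using less.IH mult monoms_E[of k n] borel_closure.mult by metis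
        next
          case move
          have "u + E j = (w - E j + E j) + E i" using move(6) by (simp add: add_ac)
          also have "\<dots> = w + E i" using E_plus_minus[OF move(5)] by simp
          finally have "u + E j = w + E i" .
          then have "weight n u + (n + 1 - j) = weight n w + (n + 1 - i)"
            using move by (metis weight_add_E less_imp_le order.trans)
          then have "weight n w < weight n u" using move by simp
          then show ?thesis using less.IH move borel_closure.move by metis
        qed
      qed
    qed
  qed
qed

lemma bgens_eq_minimal:
  fixes B :: "('k::field) mpoly set"
  assumes B: "borel_ideal n B"
  shows "bgens n B = {m. borel_minimal n (mono_exps n B) m}"
proof -
  let ?U = "mono_exps n B" and ?G = "{m. borel_minimal n (mono_exps n B) m}"
  have B_supp: "B = supp_ideal n ?U"
    using B monomial_ideal_supp by (auto simp: borel_ideal_def)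
  have U_sub: "?U \<subseteq> monoms n" by (auto simp: mono_exps_def)
  have G_sub: "?G \<subseteq> monoms n" by (auto simp: borel_minimal_def mono_exps_def)
  have borel_eq: "(borel_of n T :: 'k mpoly set) = B \<longleftrightarrow> borel_closure n T = ?U"
    if "T \<subseteq> monoms n" for T
    using borel_of_closure[OF that] B_supp supp_ideal_inj[OF _ U_sub] borel_closure_monoms
    by (metis subsetI)
  have G_gen: "(borel_of n ?G :: 'k mpoly set) = B"
    using borel_eq[OF G_sub] borel_closure_minimal[OF B] by simp
  show ?thesis
    unfolding bgens_def
  proof (rule the_equality)
    show "?G \<subseteq> monoms n \<and> (borel_of n ?G :: 'k mpoly set) = B \<and>
      (\<forall>T'. T' \<subset> ?G \<longrightarrow> (borel_of n T' :: 'k mpoly set) \<noteq> B)"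
    proof (intro conjI G_sub G_gen allI impI notI)
      fix T' assume T': "T' \<subset> ?G" "(borel_of n T' :: 'k mpoly set) = B"
      then have "borel_closure n T' = ?U" using borel_eq[of T'] G_sub by blast
      then have "?G \<subseteq> T'" using borel_minimal_in_gens by blast
      then show False using T'(1) by blast
    qed
  next
    fix T assume "T \<subseteq> monoms n \<and> (borel_of n T :: 'k mpoly set) = B \<and>
      (\<forall>T'. T' \<subset> T \<longrightarrow> (borel_of n T' :: 'k mpoly set) \<noteq> B)"
    then have "borel_closure n T = ?U" and minimal: "\<forall>T'. T' \<subset> T \<longrightarrow> (borel_of n T' :: 'k mpoly set) \<noteq> B"
      using borel_eq by blast+
    then have "?G \<subseteq> T" using borel_minimal_in_gens by blast
    then show "T = ?G" using minimal G_gen by blast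
  qed
qed

subsection \<open>Annihilator witnesses\<close>

definition ann_witness :: "nat \<Rightarrow> nat \<Rightarrow> (nat \<Rightarrow>\<^sub>0 nat) set \<Rightarrow> (nat \<Rightarrow>\<^sub>0 nat) \<Rightarrow> bool" where
  "ann_witness n p U \<mu> \<longleftrightarrow> \<mu> \<in> monoms n \<and> (\<forall>\<kappa>\<in>monoms n. \<kappa> + \<mu> \<in> U \<longleftrightarrow> \<kappa> \<in> prime_exps n p)"

lemma colon_ann_witness:
  fixes B :: "('k::field) mpoly set"
  assumes "B = supp_ideal n U" "U \<subseteq> monoms n" "ann_witness n p U \<mu>"
  shows "colon n B (mono_poly \<mu>) = supp_ideal n (prime_exps n p)"
proof -
  have "colon n B (mono_poly \<mu>) = supp_ideal n {k \<in> monoms n. k + \<mu> \<in> U}"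
    by (rule colon_monomial[OF assms(1,2)])
  also have "{k \<in> monoms n. k + \<mu> \<in> U} = prime_exps n p"
    using assms(3) unfolding ann_witness_def prime_exps_def by blast
  finally show ?thesis .
qed

lemma ann_witness_in:
  assumes "ann_witness n p U \<mu>" "1 \<le> p" "p \<le> n"
  shows "E p + \<mu> \<in> U"
proof -
  have "E p \<in> prime_exps n p" using assms(2,3) monoms_E[of p n] by (auto simp: prime_exps_def)
  then show ?thesis using assms(1) unfolding ann_witness_def prime_exps_def by blast
qed

lemma ann_witness_not_in:
  assumes "ann_witness n p U \<mu>"
  shows "\<mu> \<notin> U"
proof -
  have "0 \<notin> prime_exps n p" by (simp add: prime_exps_def)
  then show ?thesis using assms monoms_zero[of n] unfolding ann_witness_def by (metis add_0)
qed

lemma sum_not_in_prime_exps: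
  assumes "\<forall>a\<in>A. h a \<in> monoms n \<and> h a \<notin> prime_exps n p"
  shows "sum h A \<notin> prime_exps n p"
proof
  assume "sum h A \<in> prime_exps n p"
  then obtain i where i: "1 \<le> i" "i \<le> p" "0 < Poly_Mapping.lookup (sum h A) i"
    by (auto simp: prime_exps_def)
  have "Poly_Mapping.lookup (sum h A) i = (\<Sum>a\<in>A. Poly_Mapping.lookup (h a) i)"
    by (simp add: lookup_sum)
  also have "\<dots> = 0"
    using assms i by (intro sum.neutral) (auto simp: prime_exps_def)
  finally show False using i by simp
qed

lemma up_closed_sum:
  assumes "up_closed n U" "finite A" "q \<in> A" "\<forall>a\<in>A. h a \<in> monoms n" "h q + q \<in> U"
  shows "sum h A + q \<in> U"
proof -
  have "sum h A + q = (h q + q) + sum h (A - {q})"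
    using assms(2,3) by (simp add: sum.remove add_ac)
  moreover have "sum h (A - {q}) \<in> monoms n" using assms(2,4) by (intro monoms_sum) auto
  ultimately show ?thesis using assms(1,5) by (simp add: up_closed_def)
qed

text \<open>If (B : f) is the prime, some term of f is already a witness: otherwise each term q
  is pushed into U by some kappa_q outside the prime, and so is every term by the sum of
  all kappa_q, which is outside the prime as well.\<close>

lemma ann_witness_exists:
  fixes B :: "('k::field) mpoly set"
  assumes B: "B = supp_ideal n U" and up: "up_closed n U" and f: "f \<in> polyS n"
    and col: "colon n B f = supp_ideal n (prime_exps n p)"
  shows "\<exists>\<mu>. ann_witness n p U \<mu>"
proof (rule ccontr)
  assume no_witness: "\<nexists>\<mu>. ann_witness n p U \<mu>"
  have U: "U \<subseteq> monoms n" using up by (simp add: up_closed_def)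
  have P: "prime_exps n p \<subseteq> monoms n" by (auto simp: prime_exps_def)
  have keys_f: "Poly_Mapping.keys f \<subseteq> monoms n" using f by (simp add: polyS_def)
  have colon_char: "(\<forall>q\<in>Poly_Mapping.keys f. \<kappa> + q \<in> U) \<longleftrightarrow> \<kappa> \<in> prime_exps n p"
    if \<kappa>: "\<kappa> \<in> monoms n" for \<kappa>
  proof -
    have "(mono_poly \<kappa> :: 'k mpoly) \<in> colon n B f \<longleftrightarrow> (\<forall>q\<in>Poly_Mapping.keys f. \<kappa> + q \<in> U)"
      using mono_mult_in_supp_ideal[OF U f, of \<kappa>] \<kappa> by (simp add: colon_def B mono_polyS)
    then show ?thesis using col mono_in_supp_ideal[where 'k='k, OF P, of \<kappa>] by simp
  qed
  have "\<exists>\<kappa>. \<kappa> \<in> monoms n \<and> \<kappa> + q \<in> U \<and> \<kappa> \<notin> prime_exps n p"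
    if q: "q \<in> Poly_Mapping.keys f" for q
  proof (rule ccontr)
    assume "\<nexists>\<kappa>. \<kappa> \<in> monoms n \<and> \<kappa> + q \<in> U \<and> \<kappa> \<notin> prime_exps n p"
    then have "ann_witness n p U q"
      using q keys_f colon_char by (auto simp: ann_witness_def)
    then show False using no_witness by blast
  qed
  then obtain h where h: "\<forall>q\<in>Poly_Mapping.keys f. h q \<in> monoms n \<and> h q + q \<in> U \<and> h q \<notin> prime_exps n p"
    by metis
  have "sum h (Poly_Mapping.keys f) + q \<in> U" if "q \<in> Poly_Mapping.keys f" for q
    using up_closed_sum[OF up finite_keys that] h that by simp
  moreover have "sum h (Poly_Mapping.keys f) \<in> monoms n" using h by (intro monoms_sum) auto
  ultimately have "sum h (Poly_Mapping.keys f) \<in> prime_exps n p"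
    using colon_char by blast
  moreover have "\<forall>q\<in>Poly_Mapping.keys f. h q \<in> monoms n \<and> h q \<notin> prime_exps n p"
    using h by blast
  ultimately show False using sum_not_in_prime_exps by blast
qed

text \<open>To check that x^mu is a witness it suffices that x_p x^mu \<in> U and that every monomial
  of (B : x^mu) lies in the prime; the rest follows from Borel closedness.\<close>

lemma ann_witness_intro:
  assumes up: "up_closed n U" and bc: "borel_closed n U" and p: "1 \<le> p" "p \<le> n"
    and \<mu>: "\<mu> \<in> monoms n" and gen: "E p + \<mu> \<in> U"
    and only: "\<forall>\<kappa>\<in>monoms n. \<kappa> + \<mu> \<in> U \<longrightarrow> \<kappa> \<in> prime_exps n p"
  shows "ann_witness n p U \<mu>"
  unfolding ann_witness_def
proof (intro conjI \<mu> ballI iffI)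
  fix \<kappa> assume \<kappa>: "\<kappa> \<in> monoms n"
  show "\<kappa> \<in> prime_exps n p" if "\<kappa> + \<mu> \<in> U" using only \<kappa> that by blast
  assume "\<kappa> \<in> prime_exps n p"
  then obtain i where i: "1 \<le> i" "i \<le> p" "0 < Poly_Mapping.lookup \<kappa> i"
    by (auto simp: prime_exps_def)
  have Ei: "E i + \<mu> \<in> U"
  proof (cases "i = p")
    case False
    then have "i < p" using i(2) by simp
    moreover have "0 < Poly_Mapping.lookup (E p + \<mu>) p" by (simp add: lookup_add)
    ultimately have "(E p + \<mu>) - E p + E i \<in> U"
      using bc gen i(1) p(2) unfolding borel_closed_def by blast
    then show ?thesis by (simp add: add.commute)
  qed (use gen in simp)
  have "(E i + \<mu>) + (\<kappa> - E i) \<in> U" using up Ei monoms_minus[OF \<kappa>] by (simp add: up_closed_def)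
  then show "\<kappa> + \<mu> \<in> U" using E_plus_minus[OF i(3)] by (simp add: add_ac)
qed

text \<open>If x_p x^mu = x_k w with w \<in> U and k \<noteq> p, then x^mu / x_k is a lighter witness.\<close>

lemma ann_witness_cancel_var:
  assumes up: "up_closed n U" and bc: "borel_closed n U" and p: "1 \<le> p" "p \<le> n"
    and wit: "ann_witness n p U \<mu>"
    and w: "w \<in> U" and k: "1 \<le> k" "k \<le> n" "k \<noteq> p" and eq: "E p + \<mu> = w + E k"
  shows "\<exists>\<mu>'. ann_witness n p U \<mu>' \<and> weight n \<mu>' < weight n \<mu>"
proof -
  have pos: "0 < Poly_Mapping.lookup \<mu> k"
    using arg_cong[OF eq, of "\<lambda>u. Poly_Mapping.lookup u k"] k by (simp add: lookup_add lookup_single)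
  define \<mu>' where "\<mu>' = \<mu> - E k"
  have \<mu>_eq: "\<mu> = \<mu>' + E k" using E_plus_minus[OF pos] by (simp add: \<mu>'_def)
  have w_eq: "w = E p + \<mu>'" using eq by (simp add: \<mu>_eq add.assoc[symmetric])
  have "ann_witness n p U \<mu>'"
  proof (rule ann_witness_intro[OF up bc p])
    show "\<mu>' \<in> monoms n" using wit by (simp add: ann_witness_def \<mu>'_def monoms_minus)
    show "E p + \<mu>' \<in> U" using w w_eq by simp
    show "\<forall>\<kappa>\<in>monoms n. \<kappa> + \<mu>' \<in> U \<longrightarrow> \<kappa> \<in> prime_exps n p"
    proof (intro ballI impI)
      fix \<kappa> assume \<kappa>: "\<kappa> \<in> monoms n" "\<kappa> + \<mu>' \<in> U"
      then have "\<kappa> + \<mu> \<in> U"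
        using up monoms_E[OF k(1,2)] by (simp add: up_closed_def \<mu>_eq add.assoc[symmetric])
      then show "\<kappa> \<in> prime_exps n p" using wit \<kappa>(1) by (simp add: ann_witness_def)
    qed
  qed
  moreover have "weight n \<mu>' < weight n \<mu>" using \<mu>_eq weight_add_E[OF k(1,2), of \<mu>'] k by simp
  ultimately show ?thesis by blast
qed

text \<open>If x_p x^mu = w x_i / x_j with w \<in> U, i < j and i \<noteq> p, then x^mu x_j / x_i is a
  lighter witness.\<close>

lemma ann_witness_undo_move:
  assumes up: "up_closed n U" and bc: "borel_closed n U" and p: "1 \<le> p" "p \<le> n"
    and wit: "ann_witness n p U \<mu>"
    and w: "w \<in> U" "0 < Poly_Mapping.lookup w j" and ij: "1 \<le> i" "i < j" "j \<le> n" "i \<noteq> p"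
    and eq: "E p + \<mu> = w - E j + E i"
  shows "\<exists>\<mu>'. ann_witness n p U \<mu>' \<and> weight n \<mu>' < weight n \<mu>"
proof -
  have pos: "0 < Poly_Mapping.lookup \<mu> i"
    using arg_cong[OF eq, of "\<lambda>u. Poly_Mapping.lookup u i"] ij by (simp add: lookup_add lookup_single)
  define \<mu>' where "\<mu>' = \<mu> - E i + E j"
  have "\<mu>' + E i = (\<mu> - E i + E i) + E j" unfolding \<mu>'_def by (simp only: add_ac)
  also have "\<dots> = \<mu> + E j" by (simp only: E_plus_minus[OF pos])
  finally have \<mu>'_E: "\<mu>' + E i = \<mu> + E j" .
  have "(E p + \<mu>') + E i = w + E i"
  proof -
    have "(E p + \<mu>') + E i = (E p + \<mu>) + E j" by (simp only: add.assoc \<mu>'_E)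
    also have "\<dots> = (w - E j + E j) + E i" unfolding eq by (simp only: add_ac)
    finally show ?thesis using E_plus_minus[OF w(2)] by simp
  qed
  then have w_eq: "w = E p + \<mu>'" by simp
  have "ann_witness n p U \<mu>'"
  proof (rule ann_witness_intro[OF up bc p])
    show "\<mu>' \<in> monoms n" using wit ij monoms_move[of \<mu> n j i] by (simp add: ann_witness_def \<mu>'_def)
    show "E p + \<mu>' \<in> U" using w w_eq by simp
    show "\<forall>\<kappa>\<in>monoms n. \<kappa> + \<mu>' \<in> U \<longrightarrow> \<kappa> \<in> prime_exps n p"
    proof (intro ballI impI)
      fix \<kappa> assume \<kappa>: "\<kappa> \<in> monoms n" "\<kappa> + \<mu>' \<in> U"
      have "0 < Poly_Mapping.lookup (\<kappa> + \<mu>') j" by (simp add: \<mu>'_def lookup_add)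
      then have "(\<kappa> + \<mu>') - E j + E i \<in> U" using bc \<kappa>(2) ij unfolding borel_closed_def by blast
      moreover have "(\<kappa> + \<mu>') - E j + E i = \<kappa> + \<mu>"
      proof -
        have "(\<kappa> + \<mu>') - E j = \<kappa> + (\<mu> - E i)" by (simp add: \<mu>'_def add.assoc[symmetric])
        then show ?thesis using E_plus_minus[OF pos] by (metis add.assoc)
      qed
      ultimately show "\<kappa> \<in> prime_exps n p" using wit \<kappa>(1) by (simp add: ann_witness_def)
    qed
  qed
  moreover have "weight n \<mu>' < weight n \<mu>"
  proof -
    have "weight n \<mu>' + (n + 1 - i) = weight n \<mu> + (n + 1 - j)"
      using \<mu>'_E weight_add_E[of i n \<mu>'] weight_add_E[of j n \<mu>] ij by simp
    then show ?thesis using ij by simp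
  qed
  ultimately show ?thesis by blast
qed

lemma minimal_witness_generator:
  assumes up: "up_closed n U" and bc: "borel_closed n U" and p: "1 \<le> p" "p \<le> n"
    and ex: "ann_witness n p U \<mu>0"
  shows "\<exists>\<mu>. ann_witness n p U \<mu> \<and> borel_minimal n U (E p + \<mu>)"
proof -
  obtain \<mu> where wit: "ann_witness n p U \<mu>"
    and least: "\<And>\<mu>'. ann_witness n p U \<mu>' \<Longrightarrow> weight n \<mu> \<le> weight n \<mu>'"
    using ex_has_least_nat[of "ann_witness n p U" \<mu>0 "weight n"] ex by blast
  have no_lighter: "\<nexists>\<mu>'. ann_witness n p U \<mu>' \<and> weight n \<mu>' < weight n \<mu>"
    using least by (meson not_le)
  have no_var: "\<nexists>w k. w \<in> U \<and> 1 \<le> k \<and> k \<le> n \<and> E p + \<mu> = w + E k"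
  proof
    assume "\<exists>w k. w \<in> U \<and> 1 \<le> k \<and> k \<le> n \<and> E p + \<mu> = w + E k"
    then obtain w k where w: "w \<in> U" "1 \<le> k" "k \<le> n" and eq: "E p + \<mu> = w + E k" by blast
    show False
    proof (cases "k = p")
      case True
      then have "\<mu> = w" using eq by (simp add: add.commute)
      then show False using ann_witness_not_in[OF wit] w by simp
    next
      case False
      then show False using ann_witness_cancel_var[OF up bc p wit w False eq] no_lighter by blast
    qed
  qed
  have no_move: "\<nexists>w i j. w \<in> U \<and> 1 \<le> i \<and> i < j \<and> j \<le> n \<and> 0 < Poly_Mapping.lookup w j
      \<and> E p + \<mu> = w - E j + E i"
  proof
    assume "\<exists>w i j. w \<in> U \<and> 1 \<le> i \<and> i < j \<and> j \<le> n \<and> 0 < Poly_Mapping.lookup w j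
      \<and> E p + \<mu> = w - E j + E i"
    then obtain w i j where w: "w \<in> U" "0 < Poly_Mapping.lookup w j" and ij: "1 \<le> i" "i < j" "j \<le> n"
      and eq: "E p + \<mu> = w - E j + E i" by blast
    show False
    proof (cases "i = p")
      case True
      then have "\<mu> = w - E j" using eq by (metis add.commute add_right_cancel)
      then have "E j + \<mu> = w" using E_plus_minus[OF w(2)] by (simp add: add.commute)
      moreover have "E j \<in> monoms n" using ij by (intro monoms_E) auto
      ultimately have "E j \<in> prime_exps n p"
        using wit w(1) unfolding ann_witness_def by blast
      then show False using True ij by (auto simp: prime_exps_def lookup_single when_def)
    next
      case False
      then show False using ann_witness_undo_move[OF up bc p wit w ij False eq] no_lighter by blast
    qed
  qed
  show ?thesis using wit ann_witness_in[OF wit p] no_var no_move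
    unfolding borel_minimal_def by blast
qed

theorem theorem3p2:
  fixes B :: "('k::field) mpoly set" and n p :: nat
  assumes "borel_ideal n B"
    and "1 \<le> p" and "p \<le> n"
    and "ass_prime n B (ideal_gen n {var i | i. 1 \<le> i \<and> i \<le> p})"
  shows "\<exists>m\<in>bgens n B. 0 < Poly_Mapping.lookup m p \<and>
           colon n B (mono_poly (m - Poly_Mapping.single p 1))
             = ideal_gen n {var i | i. 1 \<le> i \<and> i \<le> p}"
proof -
  let ?U = "mono_exps n B"
  have B_supp: "B = supp_ideal n ?U" and up: "up_closed n ?U"
    using monomial_ideal_supp assms(1) by (auto simp: borel_ideal_def)
  have U: "?U \<subseteq> monoms n" by (auto simp: mono_exps_def)
  have P: "ideal_gen n {var i | i. 1 \<le> i \<and> i \<le> p} = (supp_ideal n (prime_exps n p) :: 'k mpoly set)"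
    by (rule prime_ideal_supp[OF assms(3)])
  obtain f where "f \<in> polyS n" "colon n B f = supp_ideal n (prime_exps n p)"
    using assms(4) P by (auto simp: ass_prime_def)
  then obtain \<mu>0 where "ann_witness n p ?U \<mu>0" using ann_witness_exists[OF B_supp up] by blast
  then obtain \<mu> where wit: "ann_witness n p ?U \<mu>" and min: "borel_minimal n ?U (E p + \<mu>)"
    using minimal_witness_generator[OF up borel_ideal_exps[OF assms(1)] assms(2,3)] by blast
  have "E p + \<mu> \<in> bgens n B" using bgens_eq_minimal[OF assms(1)] min by simp
  moreover have "0 < Poly_Mapping.lookup (E p + \<mu>) p" by (simp add: lookup_add)
  moreover have "colon n B (mono_poly (E p + \<mu> - E p)) = ideal_gen n {var i | i. 1 \<le> i \<and> i \<le> p}"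
    using colon_ann_witness[OF B_supp U wit] P by simp
  ultimately show ?thesis by blast
qed

end
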